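(* Let $G=(V,E,w)$ be a star graph with nonnegative edge weights. Then \[ \|H_G\|\leq \max_{e\in E} w_e+\sum_{e\in E} w_e. \]
   Context: A star graph is a complete bipartite graph $K_{1,m}$: one center vertex adjacent to all other vertices, with no other edges. Qubits are placed on the vertices; with Pauli operators $X_i,Y_i,Z_i$ on qubit $i$, define $h_{ij}=\frac12(I-X_iX_j-Y_iY_j-Z_iZ_j)$ and $H_G=\sum_{\{i,j\}\in E} w_{ij}h_{ij}$; $\|\cdot\|$ denotes the operator norm. *)

theory Defs
  imports "HOL-Analysis.Analysis"
begin

text \<open>Single-qubit Pauli matrices, indexed by computational basis states
  (False = |0>, True = |1>); entry P a b is row a, column b.\<close>

definition pauliX :: "bool \<Rightarrow> bool \<Rightarrow> complex" where
  "pauliX a b = (if a \<noteq> b then 1 else 0)"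

definition pauliY :: "bool \<Rightarrow> bool \<Rightarrow> complex" where
  "pauliY a b = (if a = b then 0 else if a then \<i> else - \<i>)"

definition pauliZ :: "bool \<Rightarrow> bool \<Rightarrow> complex" where
  "pauliZ a b = (if a \<noteq> b then 0 else if a then -1 else 1)"

text \<open>Qubits sit on the vertices (type 'v); the Hilbert space is
  complex ^ ('v \<Rightarrow> bool), basis states are assignments of a bit to every vertex.\<close>

definition pauli_pair ::
  "(bool \<Rightarrow> bool \<Rightarrow> complex) \<Rightarrow> 'v::finite \<Rightarrow> 'v \<Rightarrow> complex ^ ('v \<Rightarrow> bool) ^ ('v \<Rightarrow> bool)" where
  "pauli_pair P i j = (\<chi> x y. P (x i) (y i) * P (x j) (y j) *
       (if \<forall>k. k \<noteq> i \<and> k \<noteq> j \<longrightarrow> x k = y k then 1 else 0))"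

definition hterm :: "'v::finite \<Rightarrow> 'v \<Rightarrow> complex ^ ('v \<Rightarrow> bool) ^ ('v \<Rightarrow> bool)" where
  "hterm i j = (1/2 :: real) *\<^sub>R
     (mat 1 - pauli_pair pauliX i j - pauli_pair pauliY i j - pauli_pair pauliZ i j)"

text \<open>The star graph K_{1,m}: vertex set 'n option, center None, leaves Some j
  (m = CARD('n)); the edge {None, Some j} has weight w j.\<close>

definition H_star :: "('n::finite \<Rightarrow> real) \<Rightarrow> complex ^ ('n option \<Rightarrow> bool) ^ ('n option \<Rightarrow> bool)" where
  "H_star w = (\<Sum>j\<in>UNIV. w j *\<^sub>R hterm None (Some j))"

definition op_norm :: "complex ^ 's::finite ^ 's \<Rightarrow> real" where
  "op_norm A = onorm (\<lambda>v. A *v v)"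

end

theory Submission
  imports Defs
begin

(* Since (I + X X + Y Y + Z Z)/2 exchanges two qubits, h_ij = I - SWAP_ij. So in the computational
   basis H_G is the weighted Laplacian (L v)(x) = sum_j w_j (v x - v (sigma_j x)) of the graph on bit
   strings joining x to the string sigma_j x in which the two bits of edge j are exchanged.
   For such a Laplacian 2 <u, L v> is the Dirichlet form, so Cauchy-Schwarz gives
   2 |<u, L v>| <= sqrt (E u) * sqrt (E v); splitting every edge term as
   |v x - v y|^2 <= (d x + d y) (|v x|^2 / d x + |v y|^2 / d y) by the weighted degrees gives
   E v <= 2 c |v|^2 as soon as d x + d y <= c along every edge. Taking u = L v yields |L v| <= c |v|.
   On the star, exchanging the centre bit with a differing leaf bit j changes, for every other leaf,
   whether it agrees with the centre, so d x + d (sigma_j x) = sum w + w_j. *)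

definition laplacian ::
  "('j::finite \<Rightarrow> real) \<Rightarrow> ('j \<Rightarrow> 'a \<Rightarrow> 'a) \<Rightarrow> ('a \<Rightarrow> complex) \<Rightarrow> 'a \<Rightarrow> complex" where
  "laplacian w \<sigma> v x = (\<Sum>j\<in>UNIV. of_real (w j) * (v x - v (\<sigma> j x)))"

text \<open>Each edge \<open>{x, \<sigma> j x}\<close> is counted from both of its ends.\<close>

definition dirichlet_energy ::
  "('j::finite \<Rightarrow> real) \<Rightarrow> ('j \<Rightarrow> 'a::finite \<Rightarrow> 'a) \<Rightarrow> ('a \<Rightarrow> complex) \<Rightarrow> real" where
  "dirichlet_energy w \<sigma> v = (\<Sum>j\<in>UNIV. \<Sum>x\<in>UNIV. w j * (cmod (v x - v (\<sigma> j x)))\<^sup>2)"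

definition weighted_degree :: "('j::finite \<Rightarrow> real) \<Rightarrow> ('j \<Rightarrow> 'a \<Rightarrow> 'a) \<Rightarrow> 'a \<Rightarrow> real" where
  "weighted_degree w \<sigma> x = (\<Sum>j | \<sigma> j x \<noteq> x. w j)"

lemma sum_comp_involution:
  fixes f :: "'a::finite \<Rightarrow> 'a"
  assumes "\<And>x. f (f x) = x"
  shows "(\<Sum>x\<in>UNIV. g (f x)) = (\<Sum>x\<in>UNIV. g x)"
  by (rule sum.reindex_bij_witness[of _ f f]) (auto simp: assms)

lemma sum_mult_diff_involution:
  fixes f :: "'a::finite \<Rightarrow> 'a" and a b :: "'a \<Rightarrow> 'b::comm_ring_1"
  assumes inv: "\<And>x. f (f x) = x"
  shows "2 * (\<Sum>x\<in>UNIV. a x * (b x - b (f x))) =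
    (\<Sum>x\<in>UNIV. (a x - a (f x)) * (b x - b (f x)))"
proof -
  have "(\<Sum>x\<in>UNIV. a (f x) * (b x - b (f x))) =
      - (\<Sum>x\<in>UNIV. a (f x) * (b (f x) - b (f (f x))))"
    unfolding inv sum_negf[symmetric] by (rule sum.cong[OF refl]) (simp add: algebra_simps)
  also have "\<dots> = - (\<Sum>x\<in>UNIV. a x * (b x - b (f x)))"
    using sum_comp_involution[OF inv, of "\<lambda>x. a x * (b x - b (f x))"] by simp
  finally have swapped: "(\<Sum>x\<in>UNIV. a (f x) * (b x - b (f x))) =
      - (\<Sum>x\<in>UNIV. a x * (b x - b (f x)))" .
  have "(\<Sum>x\<in>UNIV. (a x - a (f x)) * (b x - b (f x))) =
      (\<Sum>x\<in>UNIV. a x * (b x - b (f x))) - (\<Sum>x\<in>UNIV. a (f x) * (b x - b (f x)))"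
    by (simp only: left_diff_distrib sum_subtractf)
  then show ?thesis
    unfolding swapped by (simp only: diff_minus_eq_add mult_2)
qed

lemma inner_laplacian:
  fixes \<sigma> :: "'j::finite \<Rightarrow> 'a::finite \<Rightarrow> 'a"
  assumes "\<And>j x. \<sigma> j (\<sigma> j x) = x"
  shows "2 * (\<Sum>x\<in>UNIV. cnj (u x) * laplacian w \<sigma> v x) =
    (\<Sum>j\<in>UNIV. of_real (w j) * (\<Sum>x\<in>UNIV. cnj (u x - u (\<sigma> j x)) * (v x - v (\<sigma> j x))))"
proof -
  have "2 * (\<Sum>x\<in>UNIV. cnj (u x) * laplacian w \<sigma> v x) =
      (\<Sum>j\<in>UNIV. of_real (w j) * (2 * (\<Sum>x\<in>UNIV. cnj (u x) * (v x - v (\<sigma> j x)))))"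
    unfolding laplacian_def sum_distrib_left
    by (subst sum.swap) (simp add: algebra_simps)
  also have "\<dots> = (\<Sum>j\<in>UNIV. of_real (w j) *
      (\<Sum>x\<in>UNIV. cnj (u x - u (\<sigma> j x)) * (v x - v (\<sigma> j x))))"
  proof (rule sum.cong[OF refl])
    fix j
    show "of_real (w j) * (2 * (\<Sum>x\<in>UNIV. cnj (u x) * (v x - v (\<sigma> j x)))) =
        of_real (w j) * (\<Sum>x\<in>UNIV. cnj (u x - u (\<sigma> j x)) * (v x - v (\<sigma> j x)))"
      using sum_mult_diff_involution[of "\<sigma> j" "\<lambda>x. cnj (u x)" v] assms by simp
  qed
  finally show ?thesis .
qed

lemma norm_inner_laplacian_le:
  fixes \<sigma> :: "'j::finite \<Rightarrow> 'a::finite \<Rightarrow> 'a"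
  assumes inv: "\<And>j x. \<sigma> j (\<sigma> j x) = x" and w: "\<And>j. 0 \<le> w j"
  shows "2 * cmod (\<Sum>x\<in>UNIV. cnj (u x) * laplacian w \<sigma> v x) \<le>
    sqrt (dirichlet_energy w \<sigma> u) * sqrt (dirichlet_energy w \<sigma> v)"
proof -
  define d where "d f = (\<lambda>(j, x). sqrt (w j) * cmod (f x - f (\<sigma> j x)))" for f :: "'a \<Rightarrow> complex"
  have sqrt_energy: "sqrt (dirichlet_energy w \<sigma> f) = L2_set (d f) UNIV" for f
    unfolding dirichlet_energy_def L2_set_def d_def sum.cartesian_product UNIV_Times_UNIV
    by (rule arg_cong[where f = sqrt], rule sum.cong) (auto simp: power_mult_distrib w)
  have "2 * cmod (\<Sum>x\<in>UNIV. cnj (u x) * laplacian w \<sigma> v x) =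
      cmod (2 * (\<Sum>x\<in>UNIV. cnj (u x) * laplacian w \<sigma> v x))"
    by (simp add: norm_mult)
  also have "\<dots> = cmod (\<Sum>j\<in>UNIV. of_real (w j) *
      (\<Sum>x\<in>UNIV. cnj (u x - u (\<sigma> j x)) * (v x - v (\<sigma> j x))))"
    by (simp only: inner_laplacian[OF inv])
  also have "\<dots> \<le> (\<Sum>j\<in>UNIV. w j *
      (\<Sum>x\<in>UNIV. cmod (u x - u (\<sigma> j x)) * cmod (v x - v (\<sigma> j x))))"
  proof (rule order_trans[OF norm_sum sum_mono])
    fix j
    have "cmod (\<Sum>x\<in>UNIV. cnj (u x - u (\<sigma> j x)) * (v x - v (\<sigma> j x))) \<le>
        (\<Sum>x\<in>UNIV. cmod (u x - u (\<sigma> j x)) * cmod (v x - v (\<sigma> j x)))"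
      by (rule order_trans[OF norm_sum]) (simp add: norm_mult flip: complex_cnj_diff)
    then show "cmod (of_real (w j) * (\<Sum>x\<in>UNIV. cnj (u x - u (\<sigma> j x)) * (v x - v (\<sigma> j x)))) \<le>
        w j * (\<Sum>x\<in>UNIV. cmod (u x - u (\<sigma> j x)) * cmod (v x - v (\<sigma> j x)))"
      using w[of j] by (simp add: norm_mult mult_left_mono)
  qed
  also have "\<dots> = (\<Sum>p\<in>UNIV. \<bar>d u p\<bar> * \<bar>d v p\<bar>)"
    unfolding d_def sum_distrib_left sum.cartesian_product UNIV_Times_UNIV
    by (rule sum.cong) (auto simp: abs_mult w)
  also have "\<dots> \<le> L2_set (d u) UNIV * L2_set (d v) UNIV"
    by (rule L2_set_mult_ineq)
  finally show ?thesis
    unfolding sqrt_energy .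
qed

lemma power2_norm_diff_le:
  fixes a b :: "'a::real_normed_vector"
  assumes "0 < p" "0 < q"
  shows "(norm (a - b))\<^sup>2 \<le> (p + q) * ((norm a)\<^sup>2 / p + (norm b)\<^sup>2 / q)"
proof -
  have "(norm (a - b))\<^sup>2 \<le> (norm a + norm b)\<^sup>2"
    by (simp add: norm_triangle_ineq4 power_mono)
  also have "\<dots> = (p + q) * ((norm a)\<^sup>2 / p + (norm b)\<^sup>2 / q) - (q * norm a - p * norm b)\<^sup>2 / (p * q)"
    using assms by (simp add: field_simps power2_eq_square)
  also have "\<dots> \<le> (p + q) * ((norm a)\<^sup>2 / p + (norm b)\<^sup>2 / q)"
    using assms by simp
  finally show ?thesis .
qed

lemma weighted_degree_ge:
  assumes "\<And>k. 0 \<le> w k" and "\<sigma> j x \<noteq> x"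
  shows "w j \<le> weighted_degree w \<sigma> x"
  unfolding weighted_degree_def by (rule member_le_sum) (use assms in auto)

lemma dirichlet_energy_le:
  fixes \<sigma> :: "'j::finite \<Rightarrow> 'a::finite \<Rightarrow> 'a"
  assumes inv: "\<And>j x. \<sigma> j (\<sigma> j x) = x" and w: "\<And>j. 0 \<le> w j" and "0 \<le> c"
    and degree_le: "\<And>j x. \<sigma> j x \<noteq> x \<Longrightarrow>
      weighted_degree w \<sigma> x + weighted_degree w \<sigma> (\<sigma> j x) \<le> c"
  shows "dirichlet_energy w \<sigma> v \<le> 2 * c * (\<Sum>x\<in>UNIV. (cmod (v x))\<^sup>2)"
proof -
  define e where "e j x = (if \<sigma> j x \<noteq> x then w j else 0)" for j x
  \<comment> \<open>spreading \<open>|v x|\<^sup>2\<close> over the edges at \<open>x\<close> in proportion to their weights\<close>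
  define g where "g x = (cmod (v x))\<^sup>2 / weighted_degree w \<sigma> x" for x
  have e_swap: "e j (\<sigma> j x) = e j x" for j x
    by (auto simp: e_def inv)
  have degree: "weighted_degree w \<sigma> x = (\<Sum>j\<in>UNIV. e j x)" for x
    unfolding weighted_degree_def e_def by (simp add: sum.inter_filter[symmetric])
  have edge: "w j * (cmod (v x - v (\<sigma> j x)))\<^sup>2 \<le> c * e j x * (g x + g (\<sigma> j x))" for j x
  proof (cases "\<sigma> j x = x \<or> w j = 0")
    case True
    then show ?thesis by (auto simp: e_def)
  next
    case False
    then have moved: "\<sigma> j x \<noteq> x" "\<sigma> j (\<sigma> j x) \<noteq> \<sigma> j x" and "0 < w j"
      using w[of j] by (auto simp: inv)
    then have p: "0 < weighted_degree w \<sigma> x" and q: "0 < weighted_degree w \<sigma> (\<sigma> j x)"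
      using weighted_degree_ge[of w \<sigma>, OF w] by (meson less_le_trans)+
    have "(cmod (v x - v (\<sigma> j x)))\<^sup>2 \<le>
        (weighted_degree w \<sigma> x + weighted_degree w \<sigma> (\<sigma> j x)) * (g x + g (\<sigma> j x))"
      unfolding g_def by (rule power2_norm_diff_le[OF p q])
    also have "\<dots> \<le> c * (g x + g (\<sigma> j x))"
      using degree_le[OF moved(1)] p q by (intro mult_right_mono) (auto simp: g_def)
    finally show ?thesis
      using \<open>0 < w j\<close> moved by (auto simp: e_def mult.assoc intro: mult_left_mono)
  qed
  have "dirichlet_energy w \<sigma> v \<le> (\<Sum>j\<in>UNIV. \<Sum>x\<in>UNIV. c * e j x * (g x + g (\<sigma> j x)))"
    unfolding dirichlet_energy_def by (intro sum_mono edge)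
  also have "\<dots> = (\<Sum>j\<in>UNIV. 2 * c * (\<Sum>x\<in>UNIV. e j x * g x))"
  proof (rule sum.cong[OF refl])
    fix j
    have "(\<Sum>x\<in>UNIV. e j x * g (\<sigma> j x)) = (\<Sum>x\<in>UNIV. e j x * g x)"
      using sum_comp_involution[of "\<sigma> j" "\<lambda>x. e j x * g x"] by (simp add: inv e_swap)
    then show "(\<Sum>x\<in>UNIV. c * e j x * (g x + g (\<sigma> j x))) = 2 * c * (\<Sum>x\<in>UNIV. e j x * g x)"
      by (simp add: distrib_left sum.distrib sum_distrib_left[symmetric] mult.assoc)
  qed
  also have "\<dots> = 2 * c * (\<Sum>x\<in>UNIV. weighted_degree w \<sigma> x * g x)"
    unfolding degree sum_distrib_left[symmetric] sum_distrib_right by (subst sum.swap) simp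
  also have "\<dots> \<le> 2 * c * (\<Sum>x\<in>UNIV. (cmod (v x))\<^sup>2)"
    using \<open>0 \<le> c\<close> by (intro mult_left_mono sum_mono) (auto simp: g_def)
  finally show ?thesis .
qed

lemma L2_set_laplacian_le:
  fixes \<sigma> :: "'j::finite \<Rightarrow> 'a::finite \<Rightarrow> 'a"
  assumes inv: "\<And>j x. \<sigma> j (\<sigma> j x) = x" and w: "\<And>j. 0 \<le> w j" and "0 \<le> c"
    and degree_le: "\<And>j x. \<sigma> j x \<noteq> x \<Longrightarrow>
      weighted_degree w \<sigma> x + weighted_degree w \<sigma> (\<sigma> j x) \<le> c"
  shows "L2_set (\<lambda>x. cmod (laplacian w \<sigma> v x)) UNIV \<le> c * L2_set (\<lambda>x. cmod (v x)) UNIV"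
proof -
  define N where "N f = L2_set (\<lambda>x. cmod (f x)) UNIV" for f :: "'a \<Rightarrow> complex"
  define u where "u = laplacian w \<sigma> v"
  have N_sq: "(N f)\<^sup>2 = (\<Sum>x\<in>UNIV. (cmod (f x))\<^sup>2)" for f
    unfolding N_def L2_set_def by (simp add: sum_nonneg)
  have energy_le: "sqrt (dirichlet_energy w \<sigma> f) \<le> sqrt (2 * c) * N f" for f
  proof -
    have "sqrt (dirichlet_energy w \<sigma> f) \<le> sqrt (2 * c * (N f)\<^sup>2)"
      unfolding N_sq
      by (rule real_sqrt_le_mono, rule dirichlet_energy_le[OF inv w \<open>0 \<le> c\<close> degree_le])
    also have "\<dots> = sqrt (2 * c) * N f"
      by (simp add: real_sqrt_mult N_def)
    finally show ?thesis .
  qed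
  have "(N u)\<^sup>2 = Re (\<Sum>x\<in>UNIV. cnj (u x) * laplacian w \<sigma> v x)"
    unfolding N_sq u_def Re_sum
    by (rule sum.cong[OF refl]) (simp add: cmod_power2 flip: power2_eq_square)
  also have "\<dots> \<le> cmod (\<Sum>x\<in>UNIV. cnj (u x) * laplacian w \<sigma> v x)"
    by (rule complex_Re_le_cmod)
  also have "\<dots> \<le> sqrt (dirichlet_energy w \<sigma> u) * sqrt (dirichlet_energy w \<sigma> v) / 2"
    using norm_inner_laplacian_le[of \<sigma> w u v, OF inv w] by simp
  also have "\<dots> \<le> (sqrt (2 * c) * N u) * (sqrt (2 * c) * N v) / 2"
    using \<open>0 \<le> c\<close> w
    by (intro divide_right_mono mult_mono energy_le)
      (auto simp: N_def dirichlet_energy_def intro!: sum_nonneg)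
  also have "\<dots> = N u * (c * N v)"
    using \<open>0 \<le> c\<close> by (simp add: algebra_simps)
  finally have "N u * N u \<le> N u * (c * N v)"
    by (simp add: power2_eq_square)
  moreover have "0 \<le> N u" "0 \<le> c * N v"
    using \<open>0 \<le> c\<close> by (auto simp: N_def)
  ultimately have "N u \<le> c * N v"
    by (cases "N u = 0") (auto simp: mult_le_cancel_left)
  then show ?thesis
    by (simp add: N_def u_def)
qed

definition swap_qubits :: "'v \<Rightarrow> 'v \<Rightarrow> ('v \<Rightarrow> bool) \<Rightarrow> ('v \<Rightarrow> bool)" where
  "swap_qubits i j x = x(i := x j, j := x i)"

lemma swap_qubits_swap_qubits [simp]: "swap_qubits i j (swap_qubits i j x) = x"
  by (auto simp: swap_qubits_def fun_eq_iff)

lemma swap_qubits_eq_self_iff: "swap_qubits i j x = x \<longleftrightarrow> x i = x j"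
  by (auto simp: swap_qubits_def fun_eq_iff)

lemma pauli_sum_eq_swap:
  "pauliX a b * pauliX c d + pauliY a b * pauliY c d + pauliZ a b * pauliZ c d =
    2 * (if a = d \<and> c = b then 1 else 0) - (if a = b \<and> c = d then 1 else 0)"
  by (cases a; cases b; cases c; cases d) (simp_all add: pauliX_def pauliY_def pauliZ_def)

lemma hterm_entry:
  assumes "i \<noteq> j"
  shows "hterm i j $ x $ y = (if y = x then 1 else 0) - (if y = swap_qubits i j x then 1 else 0)"
proof -
  define C where "C = (\<forall>k. k \<noteq> i \<and> k \<noteq> j \<longrightarrow> x k = y k)"
  define p where "p = (x i = y i \<and> x j = y j)"
  define q where "q = (x i = y j \<and> x j = y i)"
  have eq_iff: "y = x \<longleftrightarrow> C \<and> p"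
    unfolding C_def p_def by (auto simp: fun_eq_iff)
  have swap_iff: "y = swap_qubits i j x \<longleftrightarrow> C \<and> q"
    unfolding C_def q_def using assms by (auto simp: swap_qubits_def fun_eq_iff)
  have "hterm i j $ x $ y = of_real (1/2) * ((if x = y then 1 else 0)
      - pauliX (x i) (y i) * pauliX (x j) (y j) * (if C then 1 else 0)
      - pauliY (x i) (y i) * pauliY (x j) (y j) * (if C then 1 else 0)
      - pauliZ (x i) (y i) * pauliZ (x j) (y j) * (if C then 1 else 0))"
    unfolding hterm_def vector_scaleR_component vector_minus_component C_def
    by (simp add: pauli_pair_def mat_def scaleR_conv_of_real)
  also have "\<dots> = of_real (1/2) * ((if x = y then 1 else 0) - (if C then 1 else 0) *
      (pauliX (x i) (y i) * pauliX (x j) (y j) + pauliY (x i) (y i) * pauliY (x j) (y j) +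
       pauliZ (x i) (y i) * pauliZ (x j) (y j)))"
    by (simp add: algebra_simps)
  also have "\<dots> = of_real (1/2) * ((if C \<and> p then 1 else 0) - (if C then 1 else 0) *
      (2 * (if q then 1 else 0) - (if p then 1 else 0)))"
    unfolding pauli_sum_eq_swap eq_commute[of x y] eq_iff p_def q_def ..
  also have "\<dots> = (if C \<and> p then 1 else 0) - (if C \<and> q then 1 else 0)"
    by (cases C; cases p; cases q) simp_all
  finally show ?thesis
    unfolding eq_iff swap_iff .
qed

lemma H_star_mult_vec:
  "(H_star w *v v) $ x = laplacian w (\<lambda>j. swap_qubits None (Some j)) (\<lambda>y. v $ y) x"
proof -
  have delta: "(\<Sum>y\<in>UNIV. ((if y = x then 1 else 0) - (if y = x' then 1 else 0)) * v $ y) =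
      v $ x - v $ x'" for x'
  proof -
    have "((if y = x then 1 else 0) - (if y = x' then 1 else 0)) * v $ y =
        (if y = x then v $ y else 0) - (if y = x' then v $ y else 0)" for y
      by simp
    then show ?thesis
      by (simp add: sum_subtractf)
  qed
  have "(H_star w *v v) $ x = (\<Sum>y\<in>UNIV. \<Sum>j\<in>UNIV. of_real (w j) *
      (((if y = x then 1 else 0) - (if y = swap_qubits None (Some j) x then 1 else 0)) * v $ y))"
    unfolding matrix_vector_mult_def H_star_def sum_component vector_scaleR_component
    by (simp add: hterm_entry scaleR_conv_of_real sum_distrib_right mult.assoc)
  also have "\<dots> = laplacian w (\<lambda>j. swap_qubits None (Some j)) (\<lambda>y. v $ y) x"
    unfolding laplacian_def delta[symmetric] sum_distrib_left by (rule sum.swap)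
  finally show ?thesis .
qed

lemma star_weighted_degree_sum:
  fixes w :: "'n::finite \<Rightarrow> real"
  defines "\<sigma> \<equiv> \<lambda>k. swap_qubits None (Some k)"
  assumes moved: "\<sigma> j x \<noteq> x"
  shows "weighted_degree w \<sigma> x + weighted_degree w \<sigma> (\<sigma> j x) = sum w UNIV + w j"
proof -
  have "x None \<noteq> x (Some j)"
    using moved by (simp add: \<sigma>_def swap_qubits_eq_self_iff)
  have degree: "weighted_degree w \<sigma> z = (\<Sum>k\<in>UNIV. if z None \<noteq> z (Some k) then w k else 0)" for z
    unfolding weighted_degree_def \<sigma>_def swap_qubits_eq_self_iff
    by (simp add: sum.inter_filter[symmetric])
  have "(if x None \<noteq> x (Some k) then w k else 0) +
      (if \<sigma> j x None \<noteq> \<sigma> j x (Some k) then w k else 0) = w k + (if k = j then w k else 0)" for k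
    using \<open>x None \<noteq> x (Some j)\<close>
    by (cases "x None"; cases "x (Some j)"; simp add: \<sigma>_def swap_qubits_def)
  then have "weighted_degree w \<sigma> x + weighted_degree w \<sigma> (\<sigma> j x) =
      (\<Sum>k\<in>UNIV. w k + (if k = j then w k else 0))"
    unfolding degree sum.distrib[symmetric] by simp
  also have "\<dots> = sum w UNIV + w j"
    by (simp only: sum.distrib sum.delta) simp
  finally show ?thesis .
qed

theorem lemma1:
  fixes w :: "'n::finite \<Rightarrow> real"
  assumes "\<And>j. w j \<ge> 0"
  shows "op_norm (H_star w) \<le> Max (range w) + (\<Sum>j\<in>UNIV. w j)"
proof -
  define c where "c = Max (range w) + (\<Sum>j\<in>UNIV. w j)"
  have degree_le: "sum w UNIV + w j \<le> c" for j
    unfolding c_def using Max_ge[of "range w" "w j"] by auto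
  moreover have "0 \<le> sum w UNIV + w j" for j
    using assms by (simp add: sum_nonneg)
  ultimately have "0 \<le> c"
    by (meson order_trans)
  have "norm (H_star w *v v) \<le> c * norm v" for v
    unfolding norm_vec_def H_star_mult_vec
    by (rule L2_set_laplacian_le[OF _ assms \<open>0 \<le> c\<close>])
      (simp_all add: star_weighted_degree_sum degree_le)
  then show ?thesis
    unfolding op_norm_def c_def[symmetric] by (rule onorm_le)
qed

end
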